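(* Every compact Rothberger space is productively weakly Rothberger: if $X$ is compact and Rothberger and $Y$ is weakly Rothberger, then $X\times Y$ is weakly Rothberger.
   Context: All spaces are infinite ${\sf T}_1$ topological spaces. Rothberger: for each sequence $(\mathcal{U}_n)$ of open covers there are $U_n\in\mathcal{U}_n$ with $\{U_n:n\in\mathbb{N}\}$ a cover. Weakly Rothberger: for each sequence $(\mathcal{U}_n)$ of open covers there are $U_n\in\mathcal{U}_n$ with $\bigcup_nU_n$ dense in the space. *)

theory Defs
  imports "HOL-Analysis.Analysis"
begin

definition open_cover :: "'a topology \<Rightarrow> 'a set set \<Rightarrow> bool" where
  "open_cover X \<U> \<longleftrightarrow> (\<forall>U\<in>\<U>. openin X U) \<and> \<Union>\<U> = topspace X"

definition rothberger :: "'a topology \<Rightarrow> bool" where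
  "rothberger X \<longleftrightarrow>
     (\<forall>\<U> :: nat \<Rightarrow> 'a set set. (\<forall>n. open_cover X (\<U> n)) \<longrightarrow>
        (\<exists>U. (\<forall>n. U n \<in> \<U> n) \<and> \<Union>(range U) = topspace X))"

definition weakly_rothberger :: "'a topology \<Rightarrow> bool" where
  "weakly_rothberger X \<longleftrightarrow>
     (\<forall>\<U> :: nat \<Rightarrow> 'a set set. (\<forall>n. open_cover X (\<U> n)) \<longrightarrow>
        (\<exists>U. (\<forall>n. U n \<in> \<U> n) \<and> X closure_of (\<Union>(range U)) = topspace X))"

end

theory Submission
  imports Defs
begin

text \<open>Split the sequence of open covers of \<open>X \<times> Y\<close> into countably many subsequences
  \<open>W (prod_encode (m, k))\<close>. For a fixed \<open>m\<close> and a point \<open>y\<close>, the Rothberger property of \<open>X\<close>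
  applied to the traces of these covers on \<open>X \<times> {y}\<close>, followed by compactness of \<open>X\<close>, yields
  one selection from the \<open>m\<close>-th subsequence that covers a whole tube \<open>X \<times> V\<close> around \<open>y\<close>. These
  tubes form the \<open>m\<close>-th open cover of \<open>Y\<close>; the weak Rothberger property of \<open>Y\<close> picks one tube
  \<open>V m\<close> per cover with dense union, and then the combined selections cover \<open>X \<times> \<Union>m. V m\<close>,
  which is dense in \<open>X \<times> Y\<close>.\<close>

lemma open_coverI:
  assumes "\<And>U. U \<in> \<U> \<Longrightarrow> openin X U" and "\<And>x. x \<in> topspace X \<Longrightarrow> \<exists>U\<in>\<U>. x \<in> U"
  shows "open_cover X \<U>"
  unfolding open_cover_def using assms by (blast dest: openin_subset)

lemma open_cover_imp_openin:
  "open_cover X \<U> \<Longrightarrow> U \<in> \<U> \<Longrightarrow> openin X U"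
  unfolding open_cover_def by blast

lemma open_cover_covers:
  "open_cover X \<U> \<Longrightarrow> x \<in> topspace X \<Longrightarrow> \<exists>U\<in>\<U>. x \<in> U"
  unfolding open_cover_def by blast

lemma compact_space_tube:
  assumes "compact_space X"
    and U_open: "\<And>k. openin X (U k)" and U_cover: "topspace X \<subseteq> (\<Union>k. U k)"
    and V_open: "\<And>k. openin Y (V k)" and y: "y \<in> topspace Y" "\<And>k. y \<in> V k"
  shows "\<exists>T. openin Y T \<and> y \<in> T \<and> topspace X \<times> T \<subseteq> (\<Union>k. U k \<times> V k)"
proof -
  have range_U_cover: "(\<forall>A\<in>range U. openin X A) \<and> topspace X \<subseteq> \<Union>(range U)"
    using U_open U_cover by auto
  obtain F where F: "finite F" "F \<subseteq> range U" "topspace X \<subseteq> \<Union>F"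
    using assms(1)[unfolded compact_space_alt, rule_format, OF range_U_cover] by blast
  then obtain K where K: "finite K" "topspace X \<subseteq> (\<Union>k\<in>K. U k)"
    using finite_subset_image[OF F(1,2)] by blast
  define T where "T = (\<Inter>k\<in>K. V k) \<inter> topspace Y"
  have "openin Y T"
    unfolding T_def using K(1) V_open by (rule openin_INT)
  moreover have "y \<in> T"
    unfolding T_def using y by auto
  moreover have "topspace X \<times> T \<subseteq> (\<Union>k. U k \<times> V k)"
  proof
    fix p assume "p \<in> topspace X \<times> T"
    then obtain a b where p: "p = (a, b)" "a \<in> topspace X" "b \<in> T"
      by blast
    then obtain k where k: "k \<in> K" "a \<in> U k"
      using K(2) by blast
    then have "b \<in> V k"
      using p(3) unfolding T_def by blast
    then show "p \<in> (\<Union>k. U k \<times> V k)"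
      using p(1) k(2) by blast
  qed
  ultimately show ?thesis
    by blast
qed

lemma rothberger_tube_selection:
  fixes C :: "nat \<Rightarrow> ('a \<times> 'b) set set"
  assumes "compact_space X" and "rothberger X" and y: "y \<in> topspace Y"
    and C: "\<And>k. open_cover (prod_topology X Y) (C k)"
  shows "\<exists>g V. (\<forall>k. g k \<in> C k) \<and> openin Y V \<and> y \<in> V \<and> topspace X \<times> V \<subseteq> (\<Union>k. g k)"
proof -
  define D where
    "D k = {U. openin X U \<and> (\<exists>W\<in>C k. \<exists>V. openin Y V \<and> y \<in> V \<and> U \<times> V \<subseteq> W)}" for k
  have D_cover: "open_cover X (D k)" for k
  proof (rule open_coverI)
    fix x assume "x \<in> topspace X"
    then obtain W where W: "W \<in> C k" "(x, y) \<in> W"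
      using open_cover_covers[OF C[of k], of "(x, y)"] y by auto
    then obtain U V where "openin X U" "openin Y V" "x \<in> U" "y \<in> V" "U \<times> V \<subseteq> W"
      using open_cover_imp_openin[OF C] unfolding openin_prod_topology_alt by meson
    then show "\<exists>U\<in>D k. x \<in> U"
      unfolding D_def using W(1) by blast
  qed (simp add: D_def)
  obtain U where U: "\<And>k. U k \<in> D k" and U_cover: "(\<Union>k. U k) = topspace X"
    using assms(2)[unfolded rothberger_def, rule_format, of D, OF D_cover] by blast
  have "\<forall>k. \<exists>W V. W \<in> C k \<and> openin Y V \<and> y \<in> V \<and> U k \<times> V \<subseteq> W"
    using U unfolding D_def by blast
  then obtain g V where g: "\<And>k. g k \<in> C k" and V: "\<And>k. openin Y (V k)" "\<And>k. y \<in> V k"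
    and UV: "\<And>k. U k \<times> V k \<subseteq> g k"
    by metis
  have U_open: "\<And>k. openin X (U k)"
    using U unfolding D_def by blast
  obtain T where T: "openin Y T" "y \<in> T" and tube: "topspace X \<times> T \<subseteq> (\<Union>k. U k \<times> V k)"
    using compact_space_tube[of X U Y V y, OF assms(1) U_open _ V(1) y V(2)] U_cover by auto
  have "topspace X \<times> T \<subseteq> (\<Union>k. g k)"
    using tube UV by blast
  with g T show ?thesis
    by blast
qed

definition tube_selections ::
    "'a topology \<Rightarrow> 'b topology \<Rightarrow> (nat \<Rightarrow> ('a \<times> 'b) set set) \<Rightarrow> 'b set set" where
  "tube_selections X Y C =
    {V. openin Y V \<and> (\<exists>g. (\<forall>k. g k \<in> C k) \<and> topspace X \<times> V \<subseteq> (\<Union>k. g k))}"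

lemma open_cover_tube_selections:
  assumes "compact_space X" and "rothberger X"
    and C: "\<And>k. open_cover (prod_topology X Y) (C k)"
  shows "open_cover Y (tube_selections X Y C)"
proof (rule open_coverI)
  fix y assume "y \<in> topspace Y"
  then obtain g V where "\<forall>k. g k \<in> C k" "openin Y V" "y \<in> V" "topspace X \<times> V \<subseteq> (\<Union>k. g k)"
    using rothberger_tube_selection[of X y Y C, OF assms(1,2) _ C] by blast
  then show "\<exists>V\<in>tube_selections X Y C. y \<in> V"
    unfolding tube_selections_def by blast
qed (simp add: tube_selections_def)

lemma selection_prod_decode:
  assumes "\<And>m k. g m k \<in> W (prod_encode (m, k))"
  obtains S where "\<And>n. S n \<in> W n" and "(\<Union>m. \<Union>k. g m k) \<subseteq> (\<Union>n. S n)"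
proof
  define S where "S n = g (fst (prod_decode n)) (snd (prod_decode n))" for n
  show "S n \<in> W n" for n
    using assms[of "fst (prod_decode n)" "snd (prod_decode n)"] unfolding S_def by simp
  have "g m k = S (prod_encode (m, k))" for m k
    unfolding S_def by simp
  then show "(\<Union>m. \<Union>k. g m k) \<subseteq> (\<Union>n. S n)"
    by blast
qed

lemma dense_in_prod_topology:
  assumes "Y closure_of B = topspace Y" and "topspace X \<times> B \<subseteq> S"
  shows "prod_topology X Y closure_of S = topspace (prod_topology X Y)"
proof (rule subset_antisym)
  have "topspace (prod_topology X Y) = prod_topology X Y closure_of (topspace X \<times> B)"
    by (simp add: closure_of_Times assms(1))
  also have "\<dots> \<subseteq> prod_topology X Y closure_of S"
    using assms(2) by (rule closure_of_mono)
  finally show "topspace (prod_topology X Y) \<subseteq> prod_topology X Y closure_of S" .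
qed (rule closure_of_subset_topspace)

text \<open>The infiniteness and \<open>T\<^sub>1\<close> hypotheses are the paper's standing conventions; the
  proof does not use them.\<close>

theorem lemma5p22:
  fixes X :: "'a topology" and Y :: "'b topology"
  assumes "infinite (topspace X)" and "t1_space X"
    and "infinite (topspace Y)" and "t1_space Y"
    and "compact_space X" and "rothberger X"
    and "weakly_rothberger Y"
  shows "weakly_rothberger (prod_topology X Y)"
  unfolding weakly_rothberger_def
proof (intro allI impI)
  fix W :: "nat \<Rightarrow> ('a \<times> 'b) set set"
  assume W: "\<forall>n. open_cover (prod_topology X Y) (W n)"
  define tubes where "tubes m = tube_selections X Y (\<lambda>k. W (prod_encode (m, k)))" for m
  have "open_cover Y (tubes m)" for m
    unfolding tubes_def using W by (intro open_cover_tube_selections assms(5,6)) blast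
  then obtain V where V: "\<And>m. V m \<in> tubes m" and V_dense: "Y closure_of (\<Union>m. V m) = topspace Y"
    using assms(7)[unfolded weakly_rothberger_def, rule_format, of tubes] by blast
  have "\<forall>m. \<exists>g. (\<forall>k. g k \<in> W (prod_encode (m, k))) \<and> topspace X \<times> V m \<subseteq> (\<Union>k. g k)"
    using V unfolding tubes_def tube_selections_def by blast
  then obtain g where g: "\<And>m k. g m k \<in> W (prod_encode (m, k))"
    and tube: "\<And>m. topspace X \<times> V m \<subseteq> (\<Union>k. g m k)"
    by metis
  obtain S where S: "\<And>n. S n \<in> W n" and S_cover: "(\<Union>m. \<Union>k. g m k) \<subseteq> (\<Union>n. S n)"
    using selection_prod_decode[of g W, OF g] by blast
  have "topspace X \<times> (\<Union>m. V m) \<subseteq> (\<Union>n. S n)"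
    using tube S_cover by blast
  then show "\<exists>S. (\<forall>n. S n \<in> W n) \<and>
      prod_topology X Y closure_of (\<Union>n. S n) = topspace (prod_topology X Y)"
    using S dense_in_prod_topology[OF V_dense] by (intro exI[of _ S]) simp
qed

end
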